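(* Each of the varieties $\mathsf{PSB}$, $\mathsf{PsC}$, $\mathsf{SIA}$ and $\mathsf{S^2IA}$ is closed under canonical extensions: if a conditional algebra $\langle A,\to\rangle$ belongs to one of them, then $\langle\mathcal{P}(\mathrm{Ul}(A)),\to_{T_A}\rangle$ belongs to the same variety.
   Context: A conditional algebra is $\langle A,\to\rangle$ with $A$ a Boolean algebra and $\to$ binary satisfying (C1) $a\to1=1$, (C2) $(a\to b)\wedge(a\to c)=a\to(b\wedge c)$, (C3) $(a\vee b)\to c\le(a\to c)\wedge(b\to c)$. Further equations: (C1* ) $0\to a=1$; (C3* ) $(a\to c)\wedge(b\to c)\le(a\vee b)\to c$; (C4) $a\to b\le c\to(a\to b)$; (C5) $a\wedge(a\to b)\le b$; (C6) $a\to b\le\neg b\to\neg a$; (C7) $\neg(a\to b)\le c\to\neg(a\to b)$; (C8) $(1\to(\neg a\vee b))\wedge(b\to c)\le a\to c$. $\mathsf{PSB}$ = conditional algebras satisfying C1*, C3*; $\mathsf{PsC}$ = $\mathsf{PSB}$ + C5, C6; $\mathsf{SIA}$ = $\mathsf{PSB}$ + C4, C5, C7, C8; $\mathsf{S^2IA}$ = $\mathsf{PSB}$ + C4, C5, C6, C7. Filters include the improper filter $A$; $\varphi(F)=\{u\in\mathrm{Ul}(A):F\subseteq u\}$; $D^{\to}_u(F)=\{b:\exists a\in F,\ a\to b\in u\}$; $T_A(u,Z,v)$ iff there is a filter $F$ with $Z=\varphi(F)$ and $D^{\to}_u(F)\subseteq v$; $T_A(u,Z)=\{v:T_A(u,Z,v)\}$;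 $U\to_{T_A}V=\{u:\forall Z\subseteq U,\ T_A(u,Z)\subseteq V\}$. *)

theory Defs
  imports Main
begin

text \<open>A Boolean algebra presented explicitly (carrier and operations), so that both
  an abstract Boolean algebra (a type of class boolean_algebra) and the powerset
  algebra of the set of ultrafilters can be treated uniformly.\<close>

record 'a BA =
  bcarr :: "'a set"
  bmeet :: "'a \<Rightarrow> 'a \<Rightarrow> 'a"
  bjoin :: "'a \<Rightarrow> 'a \<Rightarrow> 'a"
  bneg  :: "'a \<Rightarrow> 'a"
  bzero :: "'a"
  bone  :: "'a"

definition ble :: "'a BA \<Rightarrow> 'a \<Rightarrow> 'a \<Rightarrow> bool" where
  "ble B a b \<longleftrightarrow> bmeet B a b = a"

definition type_BA :: "('a::boolean_algebra) BA" where
  "type_BA = \<lparr>bcarr = UNIV, bmeet = inf, bjoin = sup, bneg = uminus, bzero = bot, bone = top\<rparr>"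

definition pow_BA :: "'b set \<Rightarrow> 'b set BA" where
  "pow_BA U = \<lparr>bcarr = Pow U, bmeet = (\<inter>), bjoin = (\<union>), bneg = (\<lambda>X. U - X),
                bzero = {}, bone = U\<rparr>"

definition cond_alg :: "'a BA \<Rightarrow> ('a \<Rightarrow> 'a \<Rightarrow> 'a) \<Rightarrow> bool" where
  "cond_alg B imp \<longleftrightarrow>
     (\<forall>a\<in>bcarr B. \<forall>b\<in>bcarr B. imp a b \<in> bcarr B) \<and>
     (\<forall>a\<in>bcarr B. imp a (bone B) = bone B) \<and>
     (\<forall>a\<in>bcarr B. \<forall>b\<in>bcarr B. \<forall>c\<in>bcarr B.
        bmeet B (imp a b) (imp a c) = imp a (bmeet B b c)) \<and>
     (\<forall>a\<in>bcarr B. \<forall>b\<in>bcarr B. \<forall>c\<in>bcarr B.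
        ble B (imp (bjoin B a b) c) (bmeet B (imp a c) (imp b c)))"

definition C1s :: "'a BA \<Rightarrow> ('a \<Rightarrow> 'a \<Rightarrow> 'a) \<Rightarrow> bool" where
  "C1s B imp \<longleftrightarrow> (\<forall>a\<in>bcarr B. imp (bzero B) a = bone B)"

definition C3s :: "'a BA \<Rightarrow> ('a \<Rightarrow> 'a \<Rightarrow> 'a) \<Rightarrow> bool" where
  "C3s B imp \<longleftrightarrow> (\<forall>a\<in>bcarr B. \<forall>b\<in>bcarr B. \<forall>c\<in>bcarr B.
      ble B (bmeet B (imp a c) (imp b c)) (imp (bjoin B a b) c))"

definition C4 :: "'a BA \<Rightarrow> ('a \<Rightarrow> 'a \<Rightarrow> 'a) \<Rightarrow> bool" where
  "C4 B imp \<longleftrightarrow> (\<forall>a\<in>bcarr B. \<forall>b\<in>bcarr B. \<forall>c\<in>bcarr B.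
      ble B (imp a b) (imp c (imp a b)))"

definition C5 :: "'a BA \<Rightarrow> ('a \<Rightarrow> 'a \<Rightarrow> 'a) \<Rightarrow> bool" where
  "C5 B imp \<longleftrightarrow> (\<forall>a\<in>bcarr B. \<forall>b\<in>bcarr B. ble B (bmeet B a (imp a b)) b)"

definition C6 :: "'a BA \<Rightarrow> ('a \<Rightarrow> 'a \<Rightarrow> 'a) \<Rightarrow> bool" where
  "C6 B imp \<longleftrightarrow> (\<forall>a\<in>bcarr B. \<forall>b\<in>bcarr B.
      ble B (imp a b) (imp (bneg B b) (bneg B a)))"

definition C7 :: "'a BA \<Rightarrow> ('a \<Rightarrow> 'a \<Rightarrow> 'a) \<Rightarrow> bool" where
  "C7 B imp \<longleftrightarrow> (\<forall>a\<in>bcarr B. \<forall>b\<in>bcarr B. \<forall>c\<in>bcarr B.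
      ble B (bneg B (imp a b)) (imp c (bneg B (imp a b))))"

definition C8 :: "'a BA \<Rightarrow> ('a \<Rightarrow> 'a \<Rightarrow> 'a) \<Rightarrow> bool" where
  "C8 B imp \<longleftrightarrow> (\<forall>a\<in>bcarr B. \<forall>b\<in>bcarr B. \<forall>c\<in>bcarr B.
      ble B (bmeet B (imp (bone B) (bjoin B (bneg B a) b)) (imp b c)) (imp a c))"

definition PSB :: "'a BA \<Rightarrow> ('a \<Rightarrow> 'a \<Rightarrow> 'a) \<Rightarrow> bool" where
  "PSB B imp \<longleftrightarrow> cond_alg B imp \<and> C1s B imp \<and> C3s B imp"

definition PsC :: "'a BA \<Rightarrow> ('a \<Rightarrow> 'a \<Rightarrow> 'a) \<Rightarrow> bool" where
  "PsC B imp \<longleftrightarrow> PSB B imp \<and> C5 B imp \<and> C6 B imp"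

definition SIA :: "'a BA \<Rightarrow> ('a \<Rightarrow> 'a \<Rightarrow> 'a) \<Rightarrow> bool" where
  "SIA B imp \<longleftrightarrow> PSB B imp \<and> C4 B imp \<and> C5 B imp \<and> C7 B imp \<and> C8 B imp"

definition S2IA :: "'a BA \<Rightarrow> ('a \<Rightarrow> 'a \<Rightarrow> 'a) \<Rightarrow> bool" where
  "S2IA B imp \<longleftrightarrow> PSB B imp \<and> C4 B imp \<and> C5 B imp \<and> C6 B imp \<and> C7 B imp"

text \<open>Filters (the improper filter UNIV included) and ultrafilters of a Boolean algebra type.\<close>
definition is_filter :: "('a::boolean_algebra) set \<Rightarrow> bool" where
  "is_filter F \<longleftrightarrow> top \<in> F \<and> (\<forall>a\<in>F. \<forall>b. a \<le> b \<longrightarrow> b \<in> F) \<and>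
                   (\<forall>a\<in>F. \<forall>b\<in>F. inf a b \<in> F)"

definition is_ultrafilter :: "('a::boolean_algebra) set \<Rightarrow> bool" where
  "is_ultrafilter u \<longleftrightarrow> is_filter u \<and> u \<noteq> UNIV \<and>
     (\<forall>G. is_filter G \<and> u \<subseteq> G \<and> G \<noteq> UNIV \<longrightarrow> G = u)"

definition Ul :: "('a::boolean_algebra) set set" where
  "Ul = {u. is_ultrafilter u}"

definition phi :: "('a::boolean_algebra) set \<Rightarrow> 'a set set" where
  "phi F = {u \<in> Ul. F \<subseteq> u}"

definition Dimp :: "('a::boolean_algebra \<Rightarrow> 'a \<Rightarrow> 'a) \<Rightarrow> 'a set \<Rightarrow> 'a set \<Rightarrow> 'a set" where
  "Dimp imp u F = {b. \<exists>a\<in>F. imp a b \<in> u}"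

definition TA :: "('a::boolean_algebra \<Rightarrow> 'a \<Rightarrow> 'a) \<Rightarrow> 'a set \<Rightarrow> 'a set set \<Rightarrow> 'a set \<Rightarrow> bool" where
  "TA imp u Z v \<longleftrightarrow> (\<exists>F. is_filter F \<and> Z = phi F \<and> Dimp imp u F \<subseteq> v)"

definition TA_set :: "('a::boolean_algebra \<Rightarrow> 'a \<Rightarrow> 'a) \<Rightarrow> 'a set \<Rightarrow> 'a set set \<Rightarrow> 'a set set" where
  "TA_set imp u Z = {v \<in> Ul. TA imp u Z v}"

definition imp_T :: "('a::boolean_algebra \<Rightarrow> 'a \<Rightarrow> 'a) \<Rightarrow> 'a set set \<Rightarrow> 'a set set \<Rightarrow> 'a set set" where
  "imp_T imp U V = {u \<in> Ul. \<forall>Z. Z \<subseteq> U \<longrightarrow> TA_set imp u Z \<subseteq> V}"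

end

theory Submission
  imports Defs
begin

(* Each axiom transfers from A to P(Ul(A)) by a pointwise argument on ultrafilters; the one
   nonconstructive tool is the prime filter theorem: a filter disjoint from an ideal extends to an
   ultrafilter disjoint from it.

   For C3*: by C1* and C3* of A, the elements a with a -> b in u for some b outside v form an ideal,
   so every filter F with D_u(F) <= v extends to an ultrafilter w in phi(F) with D_u(w) <= v; hence
   only the ultrafilters in U matter for U ->_T V. For C1*, phi(F) = {} forces F to be improper, and
   then 0 -> 0 = 1 puts 0 into D_u(F). For C6, C6 of A makes the filter generated by F and D_u(v)
   proper; for C8 the definition is applied to the filter generated by F and D_u({1}). By C4
   (resp. C7) of A, u and each of its T_A-successors v agree on the conditionals in u (resp. in v),
   and C5 gives D_u(u) <= u. *)

section \<open>Filters and ideals\<close>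

lemma filter_top: "is_filter F \<Longrightarrow> top \<in> F"
  by (simp add: is_filter_def)

lemma filter_upward: "is_filter F \<Longrightarrow> a \<in> F \<Longrightarrow> a \<le> b \<Longrightarrow> b \<in> F"
  by (auto simp add: is_filter_def)

lemma filter_inf: "is_filter F \<Longrightarrow> a \<in> F \<Longrightarrow> b \<in> F \<Longrightarrow> inf a b \<in> F"
  by (auto simp add: is_filter_def)

lemma filter_bot_iff: "is_filter F \<Longrightarrow> bot \<in> F \<longleftrightarrow> F = UNIV"
  using filter_upward by fastforce

lemma is_filter_principal: "is_filter {x. a \<le> x}"
  by (auto simp add: is_filter_def)

lemma is_filter_Union_chain:
  assumes "C \<noteq> {}" and filters: "\<And>F. F \<in> C \<Longrightarrow> is_filter F" and "chain\<^sub>\<subseteq> C"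
  shows "is_filter (\<Union>C)"
  unfolding is_filter_def
proof (intro conjI ballI allI impI)
  show "top \<in> \<Union>C" using \<open>C \<noteq> {}\<close> filters filter_top by blast
next
  fix a b assume "a \<in> \<Union>C" "a \<le> b"
  then show "b \<in> \<Union>C" using filters filter_upward by blast
next
  fix a b assume "a \<in> \<Union>C" "b \<in> \<Union>C"
  then obtain F G where "F \<in> C" "G \<in> C" "a \<in> F" "b \<in> G" by blast
  moreover have "F \<subseteq> G \<or> G \<subseteq> F"
    using \<open>chain\<^sub>\<subseteq> C\<close> \<open>F \<in> C\<close> \<open>G \<in> C\<close> by (simp add: chain_subset_def)
  ultimately show "inf a b \<in> \<Union>C" using filters filter_inf by blast
qed

definition filter_join :: "('a::boolean_algebra) set \<Rightarrow> 'a set \<Rightarrow> 'a set" where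
  "filter_join F G = {x. \<exists>a\<in>F. \<exists>b\<in>G. inf a b \<le> x}"

lemma is_filter_filter_join:
  assumes F: "is_filter F" and G: "is_filter G"
  shows "is_filter (filter_join F G)"
  unfolding is_filter_def
proof (intro conjI ballI allI impI)
  show "top \<in> filter_join F G"
    using filter_top[OF F] filter_top[OF G] by (auto simp: filter_join_def)
next
  fix x y assume "x \<in> filter_join F G" "x \<le> y"
  then show "y \<in> filter_join F G" by (auto simp: filter_join_def intro: order_trans)
next
  fix x y assume "x \<in> filter_join F G" "y \<in> filter_join F G"
  then obtain a b a' b' where "a \<in> F" "b \<in> G" "inf a b \<le> x" "a' \<in> F" "b' \<in> G" "inf a' b' \<le> y"
    by (auto simp: filter_join_def)
  moreover from this have "inf (inf a a') (inf b b') \<le> inf x y"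
    by (meson le_inf_iff inf_le1 inf_le2 order_trans)
  ultimately show "inf x y \<in> filter_join F G"
    unfolding filter_join_def using filter_inf[OF F] filter_inf[OF G] by blast
qed

lemma filter_join_upper1: "is_filter G \<Longrightarrow> F \<subseteq> filter_join F G"
  by (force simp: filter_join_def dest: filter_top)

lemma filter_join_upper2: "is_filter F \<Longrightarrow> G \<subseteq> filter_join F G"
  by (force simp: filter_join_def dest: filter_top)

lemma mem_filter_join_principal: "x \<in> filter_join F {y. c \<le> y} \<longleftrightarrow> (\<exists>m\<in>F. inf m c \<le> x)"
  unfolding filter_join_def by (blast intro: order_trans inf_mono)

definition is_ideal :: "('a::boolean_algebra) set \<Rightarrow> bool" where
  "is_ideal I \<longleftrightarrow> bot \<in> I \<and> (\<forall>a\<in>I. \<forall>b. b \<le> a \<longrightarrow> b \<in> I) \<and> (\<forall>a\<in>I. \<forall>b\<in>I. sup a b \<in> I)"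

lemma is_ideal_bot: "is_ideal {bot}"
  by (auto simp: is_ideal_def bot_unique)

lemma ideal_downward: "is_ideal I \<Longrightarrow> a \<in> I \<Longrightarrow> b \<le> a \<Longrightarrow> b \<in> I"
  by (simp add: is_ideal_def)

lemma maximal_filter_prime:
  assumes M: "is_filter M" and I: "is_ideal I" and disj: "M \<inter> I = {}"
    and max: "\<And>G. is_filter G \<Longrightarrow> M \<subseteq> G \<Longrightarrow> G \<inter> I = {} \<Longrightarrow> G = M"
  shows "a \<in> M \<or> -a \<in> M"
proof (rule ccontr)
  assume neither: "\<not> (a \<in> M \<or> -a \<in> M)"
  have escape: "\<exists>m\<in>M. inf m c \<in> I" if "c \<notin> M" for c
  proof -
    let ?G = "filter_join M {x. c \<le> x}"
    have "c \<in> ?G" using filter_join_upper2[OF M, of "{x. c \<le> x}"] by auto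
    then have "?G \<noteq> M" using that by blast
    then have "?G \<inter> I \<noteq> {}"
      using max[OF is_filter_filter_join[OF M is_filter_principal] filter_join_upper1[OF is_filter_principal]]
      by blast
    then obtain x where "x \<in> ?G" "x \<in> I" by blast
    then obtain m where "m \<in> M" "inf m c \<le> x" by (auto simp: mem_filter_join_principal)
    then show ?thesis using ideal_downward[OF I \<open>x \<in> I\<close>] by blast
  qed
  then obtain m m' where m: "m \<in> M" "inf m a \<in> I" and m': "m' \<in> M" "inf m' (-a) \<in> I"
    using neither by blast
  have "sup (inf m a) (inf m' (-a)) \<in> I" using I m(2) m'(2) unfolding is_ideal_def by blast
  have "inf m m' = sup (inf (inf m m') a) (inf (inf m m') (-a))"
    by (simp add: inf_sup_distrib1[symmetric])
  also have "\<dots> \<le> sup (inf m a) (inf m' (-a))"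
    by (intro sup_mono inf_mono) simp_all
  finally have "inf m m' \<in> I" by (rule ideal_downward[OF I \<open>sup (inf m a) (inf m' (-a)) \<in> I\<close>])
  moreover have "inf m m' \<in> M" using filter_inf[OF M m(1) m'(1)] .
  ultimately show False using disj by blast
qed

section \<open>Ultrafilters\<close>

lemma Ul_iff:
  "u \<in> Ul \<longleftrightarrow> is_filter u \<and> bot \<notin> u \<and> (\<forall>G. is_filter G \<longrightarrow> u \<subseteq> G \<longrightarrow> bot \<notin> G \<longrightarrow> G = u)"
  unfolding Ul_def is_ultrafilter_def using filter_bot_iff by blast

lemma Ul_filter: "u \<in> Ul \<Longrightarrow> is_filter u"
  by (simp add: Ul_iff)

lemma Ul_bot: "u \<in> Ul \<Longrightarrow> bot \<notin> u"
  by (simp add: Ul_iff)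

lemma Ul_upward: "u \<in> Ul \<Longrightarrow> a \<in> u \<Longrightarrow> a \<le> b \<Longrightarrow> b \<in> u"
  using Ul_filter filter_upward by blast

lemma Ul_inf: "u \<in> Ul \<Longrightarrow> inf a b \<in> u \<longleftrightarrow> a \<in> u \<and> b \<in> u"
  using Ul_filter filter_inf Ul_upward by (metis inf_le1 inf_le2)

lemma Ul_compl:
  assumes u: "u \<in> Ul"
  shows "-a \<in> u \<longleftrightarrow> a \<notin> u"
proof -
  have "a \<in> u \<or> -a \<in> u"
    using u by (intro maximal_filter_prime[OF _ is_ideal_bot]) (auto simp: Ul_iff)
  moreover have "\<not> (a \<in> u \<and> -a \<in> u)"
    using Ul_inf[OF u, of a "-a"] Ul_bot[OF u] by simp
  ultimately show ?thesis by blast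
qed

lemma Ul_sup:
  assumes u: "u \<in> Ul"
  shows "sup a b \<in> u \<longleftrightarrow> a \<in> u \<or> b \<in> u"
proof -
  have "sup a b \<in> u \<longleftrightarrow> - inf (-a) (-b) \<in> u" by simp
  then show ?thesis using Ul_compl[OF u] Ul_inf[OF u] by blast
qed

lemma prime_filter_in_Ul:
  assumes M: "is_filter M" and "bot \<notin> M" and prime: "\<And>a. a \<in> M \<or> -a \<in> M"
  shows "M \<in> Ul"
  unfolding Ul_iff
proof (intro conjI allI impI)
  fix G assume G: "is_filter G" "M \<subseteq> G" "bot \<notin> G"
  show "G = M"
  proof (rule ccontr)
    assume "G \<noteq> M"
    then obtain x where "x \<in> G" "-x \<in> M" using G(2) prime by blast
    then have "inf x (-x) \<in> G" using G filter_inf by blast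
    then show False using G(3) by simp
  qed
qed (use assms in auto)

theorem filter_ideal_separation:
  assumes F: "is_filter F" and I: "is_ideal I" and disj: "F \<inter> I = {}"
  shows "\<exists>w\<in>Ul. F \<subseteq> w \<and> w \<inter> I = {}"
proof -
  define S where "S = {G. is_filter G \<and> F \<subseteq> G \<and> G \<inter> I = {}}"
  have "\<exists>M\<in>S. \<forall>G\<in>S. M \<subseteq> G \<longrightarrow> G = M"
  proof (rule subset_Zorn_nonempty)
    show "S \<noteq> {}" using F disj unfolding S_def by blast
  next
    fix C assume "C \<noteq> {}" and "subset.chain S C"
    then have "C \<subseteq> S" and "chain\<^sub>\<subseteq> C" by (simp_all add: subset_chain_def chain_subset_def)
    then have "is_filter (\<Union>C)"
      using is_filter_Union_chain[OF \<open>C \<noteq> {}\<close>] unfolding S_def by blast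
    moreover have "F \<subseteq> \<Union>C" "\<Union>C \<inter> I = {}"
      using \<open>C \<noteq> {}\<close> \<open>C \<subseteq> S\<close> unfolding S_def by blast+
    ultimately show "\<Union>C \<in> S" unfolding S_def by blast
  qed
  then obtain M where "M \<in> S" and max: "\<forall>G\<in>S. M \<subseteq> G \<longrightarrow> G = M" by blast
  then have M: "is_filter M" "F \<subseteq> M" "M \<inter> I = {}" by (simp_all add: S_def)
  have "a \<in> M \<or> -a \<in> M" for a
  proof (rule maximal_filter_prime[OF M(1) I M(3)])
    fix G assume "is_filter G" "M \<subseteq> G" "G \<inter> I = {}"
    then show "G = M" using max M(2) by (auto simp: S_def)
  qed
  moreover have "bot \<notin> M" using I M(3) unfolding is_ideal_def by blast
  ultimately have "M \<in> Ul" using prime_filter_in_Ul[OF M(1)] by blast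
  then show ?thesis using M by blast
qed

lemma phi_empty_iff:
  assumes F: "is_filter F"
  shows "phi F = {} \<longleftrightarrow> F = UNIV"
proof
  assume "phi F = {}"
  then have "F \<inter> {bot} \<noteq> {}"
    using filter_ideal_separation[OF F is_ideal_bot] by (auto simp: phi_def)
  then show "F = UNIV" using filter_bot_iff[OF F] by blast
next
  assume "F = UNIV"
  then show "phi F = {}" using Ul_bot by (auto simp: phi_def)
qed

lemma phi_Ul:
  assumes w: "w \<in> Ul"
  shows "phi w = {w}"
proof -
  have max: "\<And>G. is_filter G \<Longrightarrow> w \<subseteq> G \<Longrightarrow> bot \<notin> G \<Longrightarrow> G = w"
    using w by (simp add: Ul_iff)
  have "v = w" if "v \<in> Ul" "w \<subseteq> v" for v
    using max[OF Ul_filter[OF that(1)] that(2) Ul_bot[OF that(1)]] .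
  then show ?thesis using w by (auto simp: phi_def)
qed

lemma phi_top: "phi {top} = Ul"
  unfolding phi_def using Ul_filter filter_top by blast

section \<open>The canonical extension\<close>

lemma ble_type_BA: "ble type_BA a b \<longleftrightarrow> a \<le> b"
  by (simp add: ble_def type_BA_def inf.absorb_iff1)

lemma ble_pow_BA: "ble (pow_BA U) X Y \<longleftrightarrow> X \<subseteq> Y"
  by (auto simp add: ble_def pow_BA_def)

lemma cond_alg_type_BA_iff:
  "cond_alg type_BA imp \<longleftrightarrow>
     (\<forall>a. imp a top = top) \<and>
     (\<forall>a b c. inf (imp a b) (imp a c) = imp a (inf b c)) \<and>
     (\<forall>a b c. imp (sup a b) c \<le> inf (imp a c) (imp b c))"
  by (simp add: cond_alg_def ble_type_BA) (simp add: type_BA_def)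

lemma imp_mono:
  assumes "cond_alg type_BA imp" and "b \<le> c"
  shows "imp a b \<le> imp a c"
proof -
  have "imp a b = inf (imp a b) (imp a c)"
    using assms by (simp add: cond_alg_type_BA_iff inf.absorb1)
  then show ?thesis by (metis inf.cobounded2)
qed

lemma imp_antimono:
  assumes "cond_alg type_BA imp" and "a \<le> b"
  shows "imp b c \<le> imp a c"
proof -
  have "imp (sup a b) c \<le> inf (imp a c) (imp b c)"
    using assms(1) by (simp add: cond_alg_type_BA_iff)
  then show ?thesis using assms(2) by (simp add: sup.absorb2)
qed

lemma mem_imp_T_iff:
  "u \<in> imp_T imp U V \<longleftrightarrow>
     u \<in> Ul \<and> (\<forall>F v. is_filter F \<longrightarrow> phi F \<subseteq> U \<longrightarrow> v \<in> Ul \<longrightarrow> Dimp imp u F \<subseteq> v \<longrightarrow> v \<in> V)"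
  unfolding imp_T_def TA_set_def TA_def by blast

lemma imp_T_subset_Ul: "imp_T imp U V \<subseteq> Ul"
  by (auto simp: mem_imp_T_iff)

lemma imp_T_I:
  assumes "u \<in> Ul"
    and "\<And>F v. is_filter F \<Longrightarrow> phi F \<subseteq> U \<Longrightarrow> v \<in> Ul \<Longrightarrow> Dimp imp u F \<subseteq> v \<Longrightarrow> v \<in> V"
  shows "u \<in> imp_T imp U V"
  using assms by (simp add: mem_imp_T_iff)

lemma imp_T_D:
  "u \<in> imp_T imp U V \<Longrightarrow> is_filter F \<Longrightarrow> phi F \<subseteq> U \<Longrightarrow> v \<in> Ul \<Longrightarrow> Dimp imp u F \<subseteq> v \<Longrightarrow> v \<in> V"
  by (simp add: mem_imp_T_iff)

lemma imp_T_D_Ul: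
  "u \<in> imp_T imp U V \<Longrightarrow> w \<in> U \<Longrightarrow> w \<in> Ul \<Longrightarrow> v \<in> Ul \<Longrightarrow> Dimp imp u w \<subseteq> v \<Longrightarrow> v \<in> V"
  using imp_T_D[of u imp U V w v] by (simp add: phi_Ul Ul_filter)

lemma imp_top_in_Dimp: "is_filter F \<Longrightarrow> imp top b \<in> u \<Longrightarrow> b \<in> Dimp imp u F"
  by (auto simp: Dimp_def dest: filter_top)

lemma is_filter_Dimp:
  assumes imp: "cond_alg type_BA imp" and u: "u \<in> Ul" and F: "is_filter F"
  shows "is_filter (Dimp imp u F)"
  unfolding is_filter_def
proof (intro conjI ballI allI impI)
  have "imp top top \<in> u" using imp Ul_filter[OF u] filter_top by (simp add: cond_alg_type_BA_iff)
  then show "top \<in> Dimp imp u F" by (rule imp_top_in_Dimp[OF F])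
next
  fix b c assume "b \<in> Dimp imp u F" "b \<le> c"
  then show "c \<in> Dimp imp u F"
    unfolding Dimp_def using Ul_upward[OF u] imp_mono[OF imp] by blast
next
  fix b b' assume "b \<in> Dimp imp u F" "b' \<in> Dimp imp u F"
  then obtain a a' where a: "a \<in> F" "imp a b \<in> u" "a' \<in> F" "imp a' b' \<in> u"
    by (auto simp: Dimp_def)
  then have "imp (inf a a') b \<in> u" "imp (inf a a') b' \<in> u"
    using Ul_upward[OF u] imp_antimono[OF imp] by (meson inf_le1 inf_le2)+
  then have "inf (imp (inf a a') b) (imp (inf a a') b') \<in> u" using Ul_inf[OF u] by blast
  then have "imp (inf a a') (inf b b') \<in> u" using imp by (simp add: cond_alg_type_BA_iff)
  moreover have "inf a a' \<in> F" using a filter_inf[OF F] by blast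
  ultimately show "inf b b' \<in> Dimp imp u F" by (auto simp: Dimp_def)
qed

lemma cond_alg_imp_T: "cond_alg (pow_BA Ul) (imp_T imp)"
  unfolding cond_alg_def ble_pow_BA
  by (auto simp: pow_BA_def imp_T_subset_Ul) (auto simp: mem_imp_T_iff)

lemma C1s_imp_T:
  assumes "C1s type_BA imp"
  shows "C1s (pow_BA Ul) (imp_T imp)"
proof -
  have bot_bot: "imp bot bot = top" using assms by (simp add: C1s_def type_BA_def)
  have "u \<in> imp_T imp {} V" if u: "u \<in> Ul" for u V
  proof (rule imp_T_I[OF u])
    fix F v assume F: "is_filter F" "phi F \<subseteq> {}" and v: "v \<in> Ul" "Dimp imp u F \<subseteq> v"
    then have "bot \<in> F" using phi_empty_iff by blast
    moreover have "imp bot bot \<in> u" using bot_bot filter_top[OF Ul_filter[OF u]] by simp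
    ultimately have "bot \<in> Dimp imp u F" by (auto simp: Dimp_def)
    then show "v \<in> V" using v Ul_bot by blast
  qed
  then have "imp_T imp {} V = Ul" for V using imp_T_subset_Ul by blast
  then show ?thesis by (simp add: C1s_def pow_BA_def)
qed

lemma is_ideal_escaping:
  assumes imp: "PSB type_BA imp" and u: "u \<in> Ul" and v: "v \<in> Ul"
  shows "is_ideal {a. \<exists>b. b \<notin> v \<and> imp a b \<in> u}" (is "is_ideal ?I")
proof -
  have ca: "cond_alg type_BA imp" using imp by (simp add: PSB_def)
  have c3s: "inf (imp a c) (imp b c) \<le> imp (sup a b) c" for a b c
    using imp by (simp add: PSB_def C3s_def ble_type_BA) (simp add: type_BA_def)
  have "imp bot bot = top" using imp by (simp add: PSB_def C1s_def) (simp add: type_BA_def)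
  then have "imp bot bot \<in> u" using filter_top[OF Ul_filter[OF u]] by simp
  then have "bot \<in> ?I" using Ul_bot[OF v] by blast
  moreover have "a' \<in> ?I" if "a \<in> ?I" "a' \<le> a" for a a'
    using that imp_antimono[OF ca] Ul_upward[OF u] by blast
  moreover have "sup a a' \<in> ?I" if a: "a \<in> ?I" and a': "a' \<in> ?I" for a a'
  proof -
    obtain b b' where b: "b \<notin> v" "imp a b \<in> u" "b' \<notin> v" "imp a' b' \<in> u"
      using a a' by blast
    have "imp a (sup b b') \<in> u" "imp a' (sup b b') \<in> u"
      using b Ul_upward[OF u] imp_mono[OF ca] by (meson sup_ge1 sup_ge2)+
    then have "imp (sup a a') (sup b b') \<in> u"
      using c3s Ul_inf[OF u] Ul_upward[OF u] by blast
    moreover have "sup b b' \<notin> v" using b Ul_sup[OF v] by blast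
    ultimately show ?thesis by blast
  qed
  ultimately show ?thesis unfolding is_ideal_def by blast
qed

lemma ex_phi_Dimp_subset:
  assumes "PSB type_BA imp" and "u \<in> Ul" "v \<in> Ul" and "is_filter F" and "Dimp imp u F \<subseteq> v"
  shows "\<exists>w\<in>phi F. Dimp imp u w \<subseteq> v"
proof -
  have "Dimp imp u G \<subseteq> v \<longleftrightarrow> G \<inter> {a. \<exists>b. b \<notin> v \<and> imp a b \<in> u} = {}" for G
    by (auto simp: Dimp_def)
  then show ?thesis
    using filter_ideal_separation[OF \<open>is_filter F\<close> is_ideal_escaping[OF assms(1-3)]] assms(5)
    by (auto simp: phi_def)
qed

lemma C3s_imp_T:
  assumes "PSB type_BA imp"
  shows "C3s (pow_BA Ul) (imp_T imp)"
proof -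
  have "imp_T imp U W \<inter> imp_T imp U' W \<subseteq> imp_T imp (U \<union> U') W" for U U' W
  proof
    fix u assume "u \<in> imp_T imp U W \<inter> imp_T imp U' W"
    then have u: "u \<in> imp_T imp U W" "u \<in> imp_T imp U' W" by simp_all
    then have "u \<in> Ul" using imp_T_subset_Ul by blast
    show "u \<in> imp_T imp (U \<union> U') W"
    proof (rule imp_T_I[OF \<open>u \<in> Ul\<close>])
      fix F v assume "is_filter F" "phi F \<subseteq> U \<union> U'" "v \<in> Ul" "Dimp imp u F \<subseteq> v"
      then obtain w where w: "w \<in> phi F" "Dimp imp u w \<subseteq> v"
        using ex_phi_Dimp_subset[OF assms \<open>u \<in> Ul\<close>] by blast
      then have "w \<in> Ul" "w \<in> U \<or> w \<in> U'" using \<open>phi F \<subseteq> U \<union> U'\<close> by (auto simp: phi_def)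
      then show "v \<in> W" using imp_T_D_Ul[OF u(1)] imp_T_D_Ul[OF u(2)] w(2) \<open>v \<in> Ul\<close> by blast
    qed
  qed
  then show ?thesis unfolding C3s_def ble_pow_BA by (simp add: pow_BA_def)
qed

lemma PSB_imp_T:
  assumes "PSB type_BA imp"
  shows "PSB (pow_BA Ul) (imp_T imp)"
  using cond_alg_imp_T C1s_imp_T[of imp] C3s_imp_T[OF assms] assms unfolding PSB_def by blast

lemma C4_imp_T:
  assumes "C4 type_BA imp"
  shows "C4 (pow_BA Ul) (imp_T imp)"
proof -
  have c4: "imp a b \<le> imp top (imp a b)" for a b
    using assms by (simp add: C4_def ble_type_BA) (simp add: type_BA_def)
  have "imp_T imp U V \<subseteq> imp_T imp W (imp_T imp U V)" for U V W
  proof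
    fix u assume u: "u \<in> imp_T imp U V"
    then have "u \<in> Ul" using imp_T_subset_Ul by blast
    show "u \<in> imp_T imp W (imp_T imp U V)"
    proof (rule imp_T_I[OF \<open>u \<in> Ul\<close>])
      fix F v assume F: "is_filter F" and v: "v \<in> Ul" "Dimp imp u F \<subseteq> v"
      have u_v: "imp a b \<in> v" if "imp a b \<in> u" for a b
        using Ul_upward[OF \<open>u \<in> Ul\<close> that c4] imp_top_in_Dimp[OF F] v(2) by blast
      show "v \<in> imp_T imp U V"
      proof (rule imp_T_I[OF v(1)])
        fix F' w assume F': "is_filter F'" "phi F' \<subseteq> U" and w: "w \<in> Ul" "Dimp imp v F' \<subseteq> w"
        have "Dimp imp u F' \<subseteq> w" using u_v w(2) unfolding Dimp_def by blast
        then show "w \<in> V" using imp_T_D[OF u F' w(1)] by blast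
      qed
    qed
  qed
  then show ?thesis unfolding C4_def ble_pow_BA by (simp add: pow_BA_def)
qed

lemma C5_imp_T:
  assumes "C5 type_BA imp"
  shows "C5 (pow_BA Ul) (imp_T imp)"
proof -
  have c5: "inf a (imp a b) \<le> b" for a b
    using assms by (simp add: C5_def ble_type_BA) (simp add: type_BA_def)
  have "U \<inter> imp_T imp U V \<subseteq> V" for U V
  proof
    fix u assume "u \<in> U \<inter> imp_T imp U V"
    then have "u \<in> U" and u: "u \<in> imp_T imp U V" by simp_all
    then have "u \<in> Ul" using imp_T_subset_Ul by blast
    have "b \<in> u" if "a \<in> u" "imp a b \<in> u" for a b
    proof -
      have "inf a (imp a b) \<in> u" using that Ul_inf[OF \<open>u \<in> Ul\<close>] by blast
      then show ?thesis using Ul_upward[OF \<open>u \<in> Ul\<close> _ c5] by blast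
    qed
    then have "Dimp imp u u \<subseteq> u" unfolding Dimp_def by blast
    then show "u \<in> V" using imp_T_D_Ul[OF u \<open>u \<in> U\<close> \<open>u \<in> Ul\<close> \<open>u \<in> Ul\<close>] by blast
  qed
  then show ?thesis unfolding C5_def ble_pow_BA by (simp add: pow_BA_def)
qed

lemma bot_notin_filter_join_Dimp:
  assumes imp: "cond_alg type_BA imp" and "C6 type_BA imp"
    and u: "u \<in> Ul" and v: "v \<in> Ul" "Dimp imp u F \<subseteq> v"
  shows "bot \<notin> filter_join F (Dimp imp u v)"
proof
  have c6: "imp a b \<le> imp (-b) (-a)" for a b
    using assms by (simp add: C6_def ble_type_BA) (simp add: type_BA_def)
  assume "bot \<in> filter_join F (Dimp imp u v)"
  then obtain a b where "a \<in> F" "b \<in> Dimp imp u v" "inf a b \<le> bot"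
    unfolding filter_join_def by blast
  from \<open>b \<in> Dimp imp u v\<close> obtain c where "c \<in> v" "imp c b \<in> u"
    unfolding Dimp_def by blast
  have "b \<le> -a" using \<open>inf a b \<le> bot\<close> by (simp add: bot_unique inf_shunt compl_le_swap1)
  then have "imp c (-a) \<in> u"
    using Ul_upward[OF u \<open>imp c b \<in> u\<close>] imp_mono[OF imp] by blast
  then have "imp a (-c) \<in> u" using Ul_upward[OF u _ c6[of c "-a"]] by simp
  then have "-c \<in> v" using \<open>a \<in> F\<close> v(2) unfolding Dimp_def by blast
  then show False using \<open>c \<in> v\<close> Ul_compl[OF v(1)] by blast
qed

lemma C6_imp_T:
  assumes imp: "cond_alg type_BA imp" and "C6 type_BA imp"
  shows "C6 (pow_BA Ul) (imp_T imp)"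
proof -
  have "imp_T imp U V \<subseteq> imp_T imp (Ul - V) (Ul - U)" for U V
  proof
    fix u assume u: "u \<in> imp_T imp U V"
    then have "u \<in> Ul" using imp_T_subset_Ul by blast
    show "u \<in> imp_T imp (Ul - V) (Ul - U)"
    proof (rule imp_T_I[OF \<open>u \<in> Ul\<close>])
      fix F v assume F: "is_filter F" "phi F \<subseteq> Ul - V" and v: "v \<in> Ul" "Dimp imp u F \<subseteq> v"
      have "v \<notin> U"
      proof
        assume "v \<in> U"
        let ?G = "filter_join F (Dimp imp u v)"
        have D: "is_filter (Dimp imp u v)" by (rule is_filter_Dimp[OF imp \<open>u \<in> Ul\<close> Ul_filter[OF v(1)]])
        have G: "is_filter ?G" by (rule is_filter_filter_join[OF F(1) D])
        obtain w where "w \<in> Ul" "?G \<subseteq> w"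
          using phi_empty_iff[OF G] filter_bot_iff[OF G] bot_notin_filter_join_Dimp[OF assms \<open>u \<in> Ul\<close> v]
          unfolding phi_def by blast
        then have "F \<subseteq> w" "Dimp imp u v \<subseteq> w"
          using filter_join_upper1[OF D] filter_join_upper2[OF F(1)] by blast+
        have "w \<notin> V" using F(2) \<open>w \<in> Ul\<close> \<open>F \<subseteq> w\<close> unfolding phi_def by blast
        moreover have "w \<in> V"
          using imp_T_D_Ul[OF u \<open>v \<in> U\<close> v(1) \<open>w \<in> Ul\<close> \<open>Dimp imp u v \<subseteq> w\<close>] .
        ultimately show False by blast
      qed
      then show "v \<in> Ul - U" using v(1) by blast
    qed
  qed
  then show ?thesis unfolding C6_def ble_pow_BA by (simp add: pow_BA_def)
qed

lemma C7_imp_T: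
  assumes "C7 type_BA imp"
  shows "C7 (pow_BA Ul) (imp_T imp)"
proof -
  have c7: "- imp a b \<le> imp top (- imp a b)" for a b
    using assms by (simp add: C7_def ble_type_BA) (simp add: type_BA_def)
  have "Ul - imp_T imp U V \<subseteq> imp_T imp W (Ul - imp_T imp U V)" for U V W
  proof
    fix u assume "u \<in> Ul - imp_T imp U V"
    then have "u \<in> Ul" and "u \<notin> imp_T imp U V" by simp_all
    then obtain F' w where F': "is_filter F'" "phi F' \<subseteq> U"
      and w: "w \<in> Ul" "Dimp imp u F' \<subseteq> w" "w \<notin> V"
      unfolding mem_imp_T_iff by blast
    show "u \<in> imp_T imp W (Ul - imp_T imp U V)"
    proof (rule imp_T_I[OF \<open>u \<in> Ul\<close>])
      fix F v assume F: "is_filter F" and v: "v \<in> Ul" "Dimp imp u F \<subseteq> v"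
      have v_u: "imp a b \<in> u" if "imp a b \<in> v" for a b
      proof (rule ccontr)
        assume "imp a b \<notin> u"
        then have "- imp a b \<in> u" using Ul_compl[OF \<open>u \<in> Ul\<close>] by blast
        then have "imp top (- imp a b) \<in> u" using Ul_upward[OF \<open>u \<in> Ul\<close> _ c7] by blast
        then have "- imp a b \<in> v" using imp_top_in_Dimp[OF F] v(2) by blast
        then show False using \<open>imp a b \<in> v\<close> Ul_compl[OF v(1)] by blast
      qed
      have "Dimp imp v F' \<subseteq> w" using v_u w(2) unfolding Dimp_def by blast
      then have "v \<notin> imp_T imp U V" using imp_T_D[OF _ F' w(1)] w(3) by blast
      then show "v \<in> Ul - imp_T imp U V" using v(1) by blast
    qed
  qed
  then show ?thesis unfolding C7_def ble_pow_BA by (simp add: pow_BA_def)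
qed

lemma Dimp_filter_join_Dimp_top:
  assumes imp: "cond_alg type_BA imp" and "C8 type_BA imp" and u: "u \<in> Ul"
  shows "Dimp imp u (filter_join F (Dimp imp u {top})) \<subseteq> Dimp imp u F"
proof
  have c8: "inf (imp top (sup (-a) b)) (imp b c) \<le> imp a c" for a b c
    using assms by (simp add: C8_def ble_type_BA) (simp add: type_BA_def)
  fix c assume "c \<in> Dimp imp u (filter_join F (Dimp imp u {top}))"
  then obtain g where "g \<in> filter_join F (Dimp imp u {top})" "imp g c \<in> u"
    unfolding Dimp_def by blast
  then obtain f d where "f \<in> F" "imp top d \<in> u" "inf f d \<le> g"
    unfolding filter_join_def Dimp_def by blast
  have "d \<le> sup (-f) (inf f d)" by (simp add: sup_inf_distrib1)
  then have "imp top (sup (-f) (inf f d)) \<in> u"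
    using Ul_upward[OF u \<open>imp top d \<in> u\<close>] imp_mono[OF imp] by blast
  moreover have "imp (inf f d) c \<in> u"
    using Ul_upward[OF u \<open>imp g c \<in> u\<close>] imp_antimono[OF imp \<open>inf f d \<le> g\<close>] by blast
  ultimately have "inf (imp top (sup (-f) (inf f d))) (imp (inf f d) c) \<in> u"
    using Ul_inf[OF u] by blast
  then have "imp f c \<in> u" using Ul_upward[OF u _ c8] by blast
  then show "c \<in> Dimp imp u F" using \<open>f \<in> F\<close> unfolding Dimp_def by blast
qed

lemma C8_imp_T:
  assumes imp: "cond_alg type_BA imp" and "C8 type_BA imp"
  shows "C8 (pow_BA Ul) (imp_T imp)"
proof -
  have top: "is_filter {top}" using is_filter_principal[of top] by (simp add: top_unique)
  have "imp_T imp Ul (Ul - U \<union> V) \<inter> imp_T imp V W \<subseteq> imp_T imp U W" for U V W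
  proof
    fix u assume "u \<in> imp_T imp Ul (Ul - U \<union> V) \<inter> imp_T imp V W"
    then have u1: "u \<in> imp_T imp Ul (Ul - U \<union> V)" and u2: "u \<in> imp_T imp V W" by simp_all
    then have "u \<in> Ul" using imp_T_subset_Ul by blast
    show "u \<in> imp_T imp U W"
    proof (rule imp_T_I[OF \<open>u \<in> Ul\<close>])
      fix F v assume F: "is_filter F" "phi F \<subseteq> U" and v: "v \<in> Ul" "Dimp imp u F \<subseteq> v"
      let ?D = "Dimp imp u {top}"
      have D: "is_filter ?D" by (rule is_filter_Dimp[OF imp \<open>u \<in> Ul\<close> top])
      have "phi (filter_join F ?D) \<subseteq> V"
      proof
        fix w assume "w \<in> phi (filter_join F ?D)"
        then have "w \<in> Ul" "F \<subseteq> w" "?D \<subseteq> w"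
          using filter_join_upper1[OF D, of F] filter_join_upper2[OF F(1), of ?D]
          unfolding phi_def by blast+
        then have "w \<in> U" using F(2) unfolding phi_def by blast
        moreover have "w \<in> Ul - U \<union> V"
          using imp_T_D[OF u1 top _ \<open>w \<in> Ul\<close> \<open>?D \<subseteq> w\<close>] by (simp add: phi_top)
        ultimately show "w \<in> V" by blast
      qed
      moreover have "Dimp imp u (filter_join F ?D) \<subseteq> v"
        using Dimp_filter_join_Dimp_top[OF assms \<open>u \<in> Ul\<close>] v(2) by blast
      ultimately show "v \<in> W" using imp_T_D[OF u2 is_filter_filter_join[OF F(1) D] _ v(1)] by blast
    qed
  qed
  then show ?thesis unfolding C8_def ble_pow_BA by (simp add: pow_BA_def)
qed

theorem corollary9p10:
  fixes imp :: "'a::boolean_algebra \<Rightarrow> 'a \<Rightarrow> 'a"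
  shows "(PSB type_BA imp \<longrightarrow> PSB (pow_BA Ul) (imp_T imp)) \<and>
         (PsC type_BA imp \<longrightarrow> PsC (pow_BA Ul) (imp_T imp)) \<and>
         (SIA type_BA imp \<longrightarrow> SIA (pow_BA Ul) (imp_T imp)) \<and>
         (S2IA type_BA imp \<longrightarrow> S2IA (pow_BA Ul) (imp_T imp))"
proof (intro conjI impI)
  assume "PSB type_BA imp"
  then show "PSB (pow_BA Ul) (imp_T imp)" by (rule PSB_imp_T)
next
  assume "PsC type_BA imp"
  then show "PsC (pow_BA Ul) (imp_T imp)"
    using PSB_imp_T C5_imp_T C6_imp_T unfolding PsC_def PSB_def by blast
next
  assume "SIA type_BA imp"
  then show "SIA (pow_BA Ul) (imp_T imp)"
    using PSB_imp_T C4_imp_T C5_imp_T C7_imp_T C8_imp_T unfolding SIA_def PSB_def by blast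
next
  assume "S2IA type_BA imp"
  then show "S2IA (pow_BA Ul) (imp_T imp)"
    using PSB_imp_T C4_imp_T C5_imp_T C6_imp_T C7_imp_T unfolding S2IA_def PSB_def by blast
qed

end
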